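(* Let $X$, $H$, $v=(r,H,s)$ (primitive), $Y$, $a,b,c,d$, $\widetilde H=H/d$, $\gamma=\gamma(\widetilde H)$, $h$, $\widetilde h=h/d$, $K(\widetilde H)\subset K(h)$ be as in the context, and assume $\gcd(c,d\gamma)=1$. Then the canonical identification $$\epsilon:\ N(X)^*/N(X)=T(X)^*/T(X)=T(Y)^*/T(Y)=N(Y)^*/N(Y)$$ is given by $$\epsilon:\ cn\widetilde H^*+k^*+N(X)\ \mapsto\ m(a,b)\,n\,\widetilde h^*+k^*+N(Y)$$ for $n\in\mathbb Z$, $k^*\in K(\widetilde H)^*$ (with $cn\widetilde H^*+k^*\in N(X)^*$), where $m(a,b)$ is an integer with $m(a,b)\equiv-1\pmod{2a}$, $m(a,b)\equiv 1\pmod{2b}$, considered modulo $2ab/d^2$. Equivalently, $\epsilon\big(\kappa(\widetilde H)(cn,k^* )\big)=\kappa(\widetilde h)(m(a,b)n,k^* )$.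
   Context: $X$ is a smooth complex projective K3 surface with Picard lattice $N(X)$ and transcendental lattice $T(X)=N(X)^\perp$ in the unimodular lattice $H^2(X,\mathbb Z)$; similarly for $Y$. For a primitive sublattice $L$ of a unimodular lattice with orthogonal complement $L'$, $L^*/L$ and $L'^*/L'$ are canonically identified via $x^*+L\mapsto y^*+L'$ when $x^*+y^*$ lies in the unimodular lattice. $H\in N(X)$ is a polarization with $H^2=2rs$; $d\in\mathbb N$ with $\widetilde H=H/d$ primitive; $\gamma>0$ with $\widetilde H\cdot N(X)=\gamma\mathbb Z$; $v=(r,H,s)$ is a primitive isotropic Mukai vector for the Mukai pairing $-(u_0v_2+u_2v_0)+u_1\cdot v_1$ on $\mathbb Z\oplus H^2(X,\mathbb Z)\oplus\mathbb Z$; $Y$ is the moduli space of $H$-semistable coherent sheaves on $X$ with Mukai vector $v$ (a K3 surface), with Mukai's Hodge isometry $H^2(Y,\mathbb Z)\cong v^\perp/\mathbb Zv$; this embeds $T(X)$ into $T(Y)$, and when $\gcd(c,d\gamma)=1$ (Mukai) this is an equality $T(X)=T(Y)$ compatible with $H^{2,0}$. $c=\gcd(r,s)$, $a=r/c$, $b=s/c$. $h\in N(Y)$ is the class of $(-a,0,b)$ mod $\mathbb Zv$, $\widetilde h=h/d$ (primitive), $\widetilde H^*=\widetilde H/\widetilde H^2$, $\widetilde h^*=\widetilde h/\widetilde h^2$. $K(\widetilde H)=\widetilde H^\perp\subset N(X)$ is identified with a finite-index sublattice of $K(h)=h^\perp\subset N(Y)$ via $k\mapsto(0,k,0)\bmod\mathbb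 Zv$, so $K(\widetilde H)^*\supset K(h)^*$ and $K(\widetilde H)^*\subset K(h)\otimes\mathbb Q$. For an even lattice $S$ and primitive $P$ with $P^2=2m\ne0$, $P\cdot S=\gamma(P)\mathbb Z$, $K(P)=P^\perp$, $P^*=P/(2m)$, $u^*(P)\in K(P)^*$ with $\gamma(P)P^*+u^*(P)\in S$: $\widetilde K(P)^*=\{(n,k^* )\in\mathbb Z\oplus K(P)^*: n\equiv-\tfrac{2m}{\gamma(P)}(k^*\cdot u^*(P))\pmod{2m/\gamma(P)}\}$ and $\kappa(P)(n,k^* )=nP^*+k^*+S\in S^*/S$. *)

theory Defs
  imports Main "HOL.Rat"
begin

text \<open>Lattice-theoretic model. An integral lattice of rank CARD('n) is modelled as the
 integer points of 'n => rat, with Gram matrix G; rational vectors model L tensor Q.\<close>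

definition vadd :: "('n \<Rightarrow> rat) \<Rightarrow> ('n \<Rightarrow> rat) \<Rightarrow> ('n \<Rightarrow> rat)" where
  "vadd x y = (\<lambda>i. x i + y i)"

definition smul :: "rat \<Rightarrow> ('n \<Rightarrow> rat) \<Rightarrow> ('n \<Rightarrow> rat)" where
  "smul q x = (\<lambda>i. q * x i)"

definition bil :: "('n::finite \<Rightarrow> 'n \<Rightarrow> int) \<Rightarrow> ('n \<Rightarrow> rat) \<Rightarrow> ('n \<Rightarrow> rat) \<Rightarrow> rat" where
  "bil G x y = (\<Sum>i\<in>UNIV. \<Sum>j\<in>UNIV. x i * of_int (G i j) * y j)"

definition intvec :: "('n \<Rightarrow> rat) \<Rightarrow> bool" where
  "intvec x = (\<forall>i. x i \<in> \<int>)"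

definition even_unimodular :: "('n::finite \<Rightarrow> 'n \<Rightarrow> int) \<Rightarrow> bool" where
  "even_unimodular G =
     ((\<forall>i j. G i j = G j i) \<and>
      (\<forall>x. intvec x \<longrightarrow> (\<exists>k::int. bil G x x = 2 * of_int k)) \<and>
      (\<forall>x. (\<forall>y. intvec y \<longrightarrow> bil G x y \<in> \<int>) \<longrightarrow> intvec x))"

definition sublattice :: "('n \<Rightarrow> rat) set \<Rightarrow> bool" where
  "sublattice M = (M \<subseteq> {x. intvec x} \<and> (\<lambda>i. 0) \<in> M \<and>
      (\<forall>x\<in>M. \<forall>y\<in>M. vadd x y \<in> M \<and> smul (-1) x \<in> M))"

definition primitive_sublattice :: "('n \<Rightarrow> rat) set \<Rightarrow> bool" where
  "primitive_sublattice M = (sublattice M \<and>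
      (\<forall>x. intvec x \<longrightarrow> (\<exists>k::int. k \<noteq> 0 \<and> smul (of_int k) x \<in> M) \<longrightarrow> x \<in> M))"

definition nondegenerate_on :: "('n::finite \<Rightarrow> 'n \<Rightarrow> int) \<Rightarrow> ('n \<Rightarrow> rat) set \<Rightarrow> bool" where
  "nondegenerate_on G M = (\<forall>x\<in>M. (\<forall>y\<in>M. bil G x y = 0) \<longrightarrow> x = (\<lambda>i. 0))"

definition prim_vec :: "('n \<Rightarrow> rat) \<Rightarrow> bool" where
  "prim_vec x = (intvec x \<and> (\<forall>q::rat. intvec (smul q x) \<longrightarrow> q \<in> \<int>))"

text \<open>M tensor Q (for a sublattice M) and the dual lattice M^* inside it.\<close>
definition rspan :: "('n \<Rightarrow> rat) set \<Rightarrow> ('n \<Rightarrow> rat) set" where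
  "rspan M = {x. \<exists>k::int. k \<noteq> 0 \<and> smul (of_int k) x \<in> M}"

definition dual :: "('n::finite \<Rightarrow> 'n \<Rightarrow> int) \<Rightarrow> ('n \<Rightarrow> rat) set \<Rightarrow> ('n \<Rightarrow> rat) set" where
  "dual G M = {x \<in> rspan M. \<forall>y\<in>M. bil G x y \<in> \<int>}"

definition orth :: "('n::finite \<Rightarrow> 'n \<Rightarrow> int) \<Rightarrow> ('n \<Rightarrow> rat) set \<Rightarrow> ('n \<Rightarrow> rat) set" where
  "orth G M = {x. intvec x \<and> (\<forall>y\<in>M. bil G x y = 0)}"

definition Kperp :: "('n::finite \<Rightarrow> 'n \<Rightarrow> int) \<Rightarrow> ('n \<Rightarrow> rat) set \<Rightarrow> ('n \<Rightarrow> rat) \<Rightarrow> ('n \<Rightarrow> rat) set" where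
  "Kperp G M P = {x \<in> M. bil G P x = 0}"

text \<open>Mukai lattice Z + L + Z (tensor Q): triples (u0,u1,u2).\<close>
type_synonym 'n mvec = "rat \<times> ('n \<Rightarrow> rat) \<times> rat"

definition mukai :: "('n::finite \<Rightarrow> 'n \<Rightarrow> int) \<Rightarrow> 'n mvec \<Rightarrow> 'n mvec \<Rightarrow> rat" where
  "mukai G u w = (case u of (u0,u1,u2) \<Rightarrow> case w of (w0,w1,w2) \<Rightarrow>
      -(u0 * w2 + u2 * w0) + bil G u1 w1)"

definition mint :: "'n mvec \<Rightarrow> bool" where
  "mint u = (case u of (u0,u1,u2) \<Rightarrow> u0 \<in> \<int> \<and> intvec u1 \<and> u2 \<in> \<int>)"

definition madd :: "'n mvec \<Rightarrow> 'n mvec \<Rightarrow> 'n mvec" where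
  "madd u w = (case u of (u0,u1,u2) \<Rightarrow> case w of (w0,w1,w2) \<Rightarrow>
      (u0 + w0, vadd u1 w1, u2 + w2))"

definition msmul :: "rat \<Rightarrow> 'n mvec \<Rightarrow> 'n mvec" where
  "msmul q u = (case u of (u0,u1,u2) \<Rightarrow> (q * u0, smul q u1, q * u2))"

definition prim_mvec :: "'n mvec \<Rightarrow> bool" where
  "prim_mvec u = (mint u \<and> (\<forall>q::rat. mint (msmul q u) \<longrightarrow> q \<in> \<int>))"

text \<open>The canonical identification
  eps : N(X)^*/N(X) = T(X)^*/T(X) = T(Y)^*/T(Y) = N(Y)^*/N(Y)
 as a relation between representatives: x (in N(X)^*, a rational vector of L) and y
 (a rational Mukai vector orthogonal to v, representing a class of (v^perp/Zv) tensor Q)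
 correspond iff there is t in T(X)^* with x + t in H^2(X,Z) and
 y + (0,t,0) in H^2(Y,Z) = v^perp/Zv, i.e. y + (0,t,0) + q v integral for some rational q.
 Here T(X) is embedded into H^2(Y) by t |-> (0,t,0) mod Zv (Mukai).\<close>
definition eps_rel :: "('n::finite \<Rightarrow> 'n \<Rightarrow> int) \<Rightarrow> ('n \<Rightarrow> rat) set \<Rightarrow> 'n mvec
    \<Rightarrow> ('n \<Rightarrow> rat) \<Rightarrow> 'n mvec \<Rightarrow> bool" where
  "eps_rel G NX v x y = (\<exists>t \<in> dual G (orth G NX).
      intvec (vadd x t) \<and> (\<exists>q::rat. mint (madd (madd y (0, t, 0)) (msmul q v))))"

end

theory Submission
  imports Defs "HOL-Analysis.Cartesian_Space"
begin

text \<open>The class of \<open>x \<in> N(X)\<^sup>*\<close> in \<open>T(X)\<^sup>*/T(X)\<close> is found by gluing: the functional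
  \<open>bil G x\<close> on the primitive sublattice \<open>N(X)\<close> extends to an integral functional on the whole
  lattice, which unimodularity represents by a lattice vector \<open>w\<close>; then \<open>t = w - x\<close> lies in
  \<open>T(X)\<^sup>*\<close> and \<open>x + t\<close> is integral. On the side of \<open>Y\<close>, adding \<open>q v\<close> with
  \<open>q = nd/(2cab)\<close> to the proposed image plus \<open>(0, t, 0)\<close> makes its middle component \<open>x + t\<close>
  and its outer components \<open>-nd(m-1)/(2b)\<close> and \<open>nd(m+1)/(2a)\<close>, which are integers by the
  congruences for \<open>m\<close>.\<close>

definition dotp :: "('n::finite \<Rightarrow> rat) \<Rightarrow> ('n \<Rightarrow> rat) \<Rightarrow> rat" where
  "dotp u y = (\<Sum>i\<in>UNIV. u i * y i)"

lemma dotp_in_Ints: "intvec u \<Longrightarrow> intvec y \<Longrightarrow> dotp u y \<in> \<int>"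
  unfolding dotp_def intvec_def by (intro Ints_sum Ints_mult) auto

lemma dotp_vadd: "dotp u (vadd x y) = dotp u x + dotp u y"
  unfolding dotp_def vadd_def by (simp add: distrib_left sum.distrib)

lemma dotp_smul: "dotp u (smul q x) = q * dotp u x"
  unfolding dotp_def smul_def by (simp add: sum_distrib_left mult.left_commute)

lemma dotp_zero: "dotp u (\<lambda>i. 0) = 0"
  unfolding dotp_def by simp

lemma bil_in_Ints: "intvec x \<Longrightarrow> intvec y \<Longrightarrow> bil G x y \<in> \<int>"
  unfolding bil_def intvec_def by (intro Ints_sum Ints_mult) auto

lemma bil_diff_left: "bil G (\<lambda>i. x i - y i) z = bil G x z - bil G y z"
  unfolding bil_def by (simp add: left_diff_distrib sum_subtractf)

lemma bil_smul_left: "bil G (smul q x) z = q * bil G x z"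
  unfolding bil_def smul_def by (simp add: sum_distrib_left mult.assoc)

lemma bil_smul_right: "bil G z (smul q x) = q * bil G z x"
  unfolding bil_def smul_def by (simp add: sum_distrib_left mult.assoc mult.left_commute)

lemma bil_sym: "(\<And>i j. G i j = G j i) \<Longrightarrow> bil G x y = bil G y x"
  unfolding bil_def by (subst sum.swap) (simp add: ac_simps)

lemma bil_eq_dotp_row: "bil G x y = dotp (\<lambda>j. \<Sum>i\<in>UNIV. x i * of_int (G i j)) y"
  unfolding bil_def dotp_def by (subst sum.swap) (simp add: sum_distrib_right)

lemma sublattice_smul_int:
  assumes "sublattice M" "y \<in> M"
  shows "smul (of_int k) y \<in> M"
proof -
  have nat: "smul (of_nat j) y \<in> M" for j
  proof (induction j)
    case 0
    have "smul (of_nat 0) y = (\<lambda>i. 0)" by (simp add: smul_def)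
    then show ?case using assms by (simp add: sublattice_def)
  next
    case (Suc j)
    have "smul (of_nat (Suc j)) y = vadd (smul (of_nat j) y) y"
      by (simp add: smul_def vadd_def algebra_simps)
    then show ?case using Suc assms by (simp add: sublattice_def)
  qed
  show ?thesis
  proof (cases "k \<ge> 0")
    case True
    then show ?thesis using nat[of "nat k"] by simp
  next
    case False
    have "smul (of_int k) y = smul (-1) (smul (of_nat (nat (-k))) y)"
      using False by (simp add: smul_def fun_eq_iff)
    then show ?thesis using nat[of "nat (-k)"] assms by (simp add: sublattice_def)
  qed
qed

lemma intvecE:
  assumes "intvec y"
  obtains z :: "'n \<Rightarrow> int" where "y = (\<lambda>i. of_int (z i))"
proof -
  have "\<forall>i. \<exists>k. y i = of_int k" using assms unfolding intvec_def by (auto elim: Ints_cases)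
  then obtain z where "\<forall>i. y i = of_int (z i)" by metis
  then show ?thesis by (auto intro: that)
qed

lemma sum_mult_eq_Gcd:
  fixes z :: "'a \<Rightarrow> int"
  assumes "finite S"
  shows "\<exists>u. (\<Sum>i\<in>S. u i * z i) = Gcd (z ` S)"
  using assms
proof (induction S rule: finite_induct)
  case empty
  then show ?case by simp
next
  case (insert a S)
  obtain u where u: "(\<Sum>i\<in>S. u i * z i) = Gcd (z ` S)" using insert by blast
  obtain p q where pq: "p * z a + q * Gcd (z ` S) = gcd (z a) (Gcd (z ` S))"
    using bezout_int by blast
  define u' where "u' = (\<lambda>i. if i = a then p else q * u i)"
  have "(\<Sum>i\<in>insert a S. u' i * z i) = p * z a + (\<Sum>i\<in>S. u' i * z i)"
    using insert by (simp add: u'_def)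
  also have "(\<Sum>i\<in>S. u' i * z i) = q * (\<Sum>i\<in>S. u i * z i)"
    using insert by (auto simp: u'_def sum_distrib_left mult.assoc intro!: sum.cong)
  finally show ?case using u pq by (auto simp: Gcd_insert)
qed

text \<open>Here \<open>k\<close> is the gcd of the entries of \<open>y\<close> and \<open>\<phi>\<close> comes from Bezout.\<close>
lemma intvec_eq_smul_unimodular:
  assumes "intvec y" "y \<noteq> (\<lambda>i. 0)"
  obtains k :: int and m \<phi> :: "'n::finite \<Rightarrow> rat"
  where "k \<noteq> 0" "smul (of_int k) m = y" "intvec m" "intvec \<phi>" "dotp \<phi> m = 1"
proof -
  obtain z where z: "y = (\<lambda>i. of_int (z i))" using intvecE[OF assms(1)] .
  define g where "g = Gcd (range z)"
  obtain u where u: "(\<Sum>i\<in>UNIV. u i * z i) = g"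
    using sum_mult_eq_Gcd[of UNIV z] unfolding g_def by auto
  have g_dvd: "g dvd z i" for i unfolding g_def by (rule Gcd_dvd) auto
  have "g \<noteq> 0" using assms(2) unfolding z g_def by (auto simp: fun_eq_iff)
  define m where "m = (\<lambda>i. of_int (z i div g) :: rat)"
  have "smul (of_int g) m = y"
    unfolding smul_def m_def z using g_dvd by (simp flip: of_int_mult)
  moreover have "(\<Sum>i\<in>UNIV. u i * (z i div g)) = 1"
  proof -
    have "g * (u i * (z i div g)) = u i * z i" for i
      using g_dvd[of i] by (metis dvd_mult_div_cancel mult.left_commute)
    then have "g * (\<Sum>i\<in>UNIV. u i * (z i div g)) = (\<Sum>i\<in>UNIV. u i * z i)"
      by (simp only: sum_distrib_left)
    then show ?thesis using \<open>g \<noteq> 0\<close> u by simp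
  qed
  then have "dotp (\<lambda>i. of_int (u i)) m = 1"
    unfolding dotp_def m_def by (simp flip: of_int_mult of_int_sum)
  ultimately show ?thesis
    using \<open>g \<noteq> 0\<close> by (auto intro!: that[of g m "\<lambda>i. of_int (u i)"] simp: m_def intvec_def)
qed

lemma primitive_sublattice_kernel:
  assumes "primitive_sublattice M"
  shows "primitive_sublattice {y\<in>M. dotp \<phi> y = 0}"
  using assms unfolding primitive_sublattice_def sublattice_def
proof (intro conjI allI impI ballI; elim conjE exE)
  fix x k assume "\<forall>x. intvec x \<longrightarrow> (\<exists>k::int. k \<noteq> 0 \<and> smul (of_int k) x \<in> M) \<longrightarrow> x \<in> M"
    "intvec x" "k \<noteq> 0" "smul (of_int k) x \<in> {y \<in> M. dotp \<phi> y = 0}"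
  then show "x \<in> {y \<in> M. dotp \<phi> y = 0}" by (auto simp: dotp_smul)
qed (auto simp: dotp_vadd dotp_smul dotp_zero)

lemma dim_kernel_less:
  fixes M :: "('n::finite \<Rightarrow> rat) set"
  assumes "m \<in> M" "dotp \<phi> m \<noteq> 0"
  shows "vec.dim (vec_lambda ` {y\<in>M. dotp \<phi> y = 0}) < vec.dim (vec_lambda ` M)"
proof -
  define S where "S = {v :: rat^'n. (\<Sum>i\<in>UNIV. \<phi> i * v $ i) = 0}"
  have "vec.subspace S" unfolding vec.subspace_def S_def
    by (auto simp: algebra_simps sum.distrib simp flip: sum_distrib_left)
  moreover have "vec_lambda ` {y\<in>M. dotp \<phi> y = 0} \<subseteq> S" by (auto simp: S_def dotp_def)
  ultimately have "vec.span (vec_lambda ` {y\<in>M. dotp \<phi> y = 0}) \<subseteq> S" by (intro vec.span_minimal)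
  moreover have "vec_lambda m \<notin> S" "vec_lambda m \<in> vec.span (vec_lambda ` M)"
    using assms by (auto simp: S_def dotp_def intro: vec.span_base)
  moreover have "vec.span (vec_lambda ` {y\<in>M. dotp \<phi> y = 0}) \<subseteq> vec.span (vec_lambda ` M)"
    by (intro vec.span_mono) auto
  ultimately have "vec.span (vec_lambda ` {y\<in>M. dotp \<phi> y = 0}) \<subset> vec.span (vec_lambda ` M)"
    by blast
  then show ?thesis by (rule vec.dim_psubset)
qed

lemma functional_extends_from_kernel:
  assumes "sublattice M" "m \<in> M" "intvec \<phi>0" "dotp \<phi>0 m = 1" "intvec \<phi>1"
    and "\<forall>y\<in>M. dotp \<psi> y \<in> \<int>"
    and \<phi>1_\<psi>: "\<forall>y\<in>M. dotp \<phi>0 y = 0 \<longrightarrow> dotp \<phi>1 y = dotp \<psi> y"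
  shows "\<exists>\<phi>. intvec \<phi> \<and> (\<forall>y\<in>M. dotp \<phi> y = dotp \<psi> y)"
proof (intro exI conjI ballI)
  define \<beta> where "\<beta> = dotp \<psi> m - dotp \<phi>1 m"
  have "\<beta> \<in> \<int>"
    using assms dotp_in_Ints[of \<phi>1 m] unfolding \<beta>_def sublattice_def by auto
  then show "intvec (\<lambda>i. \<phi>1 i + \<beta> * \<phi>0 i)"
    using assms by (auto simp: intvec_def)
  fix y assume "y \<in> M"
  then obtain k where k: "dotp \<phi>0 y = of_int k"
    using assms dotp_in_Ints[of \<phi>0 y] unfolding sublattice_def by (auto elim: Ints_cases)
  define y' where "y' = vadd y (smul (of_int (-k)) m)"
  have "y' \<in> M"
    using assms \<open>y \<in> M\<close> sublattice_smul_int unfolding y'_def sublattice_def by blast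
  moreover have "dotp \<phi>0 y' = 0" using k assms(4) by (simp add: y'_def dotp_vadd dotp_smul)
  ultimately have "dotp \<phi>1 y' = dotp \<psi> y'" using \<phi>1_\<psi> by blast
  then have "dotp \<phi>1 y - of_int k * dotp \<phi>1 m = dotp \<psi> y - of_int k * dotp \<psi> m"
    by (simp add: y'_def dotp_vadd dotp_smul)
  moreover have "dotp (\<lambda>i. \<phi>1 i + \<beta> * \<phi>0 i) y = dotp \<phi>1 y + \<beta> * dotp \<phi>0 y"
    by (simp add: dotp_def algebra_simps sum.distrib sum_distrib_left)
  ultimately show "dotp (\<lambda>i. \<phi>1 i + \<beta> * \<phi>0 i) y = dotp \<psi> y"
    using k by (simp add: \<beta>_def algebra_simps)
qed

text \<open>A primitive sublattice is a direct summand, so integral functionals on it extend to the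
  whole lattice; the induction splits off one rank-one summand at a time.\<close>
lemma primitive_sublattice_functional_extends:
  fixes M :: "('n::finite \<Rightarrow> rat) set"
  assumes "primitive_sublattice M" "\<forall>y\<in>M. dotp \<psi> y \<in> \<int>"
  shows "\<exists>\<phi>. intvec \<phi> \<and> (\<forall>y\<in>M. dotp \<phi> y = dotp \<psi> y)"
  using assms
proof (induction "vec.dim (vec_lambda ` M)" arbitrary: M rule: less_induct)
  case less
  have sl: "sublattice M" using less.prems by (simp add: primitive_sublattice_def)
  show ?case
  proof (cases "\<forall>y\<in>M. y = (\<lambda>i. 0)")
    case True
    then show ?thesis by (intro exI[of _ "\<lambda>i. 0"]) (auto simp: intvec_def dotp_def)
  next
    case False
    then obtain y where "y \<in> M" "y \<noteq> (\<lambda>i. 0)" by auto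
    moreover have "intvec y" using sl \<open>y \<in> M\<close> by (auto simp: sublattice_def)
    ultimately obtain k m \<phi>0 where k: "k \<noteq> 0" "smul (of_int k) m = y"
      and m: "intvec m" "intvec \<phi>0" "dotp \<phi>0 m = 1"
      using intvec_eq_smul_unimodular by metis
    have "m \<in> M"
      using less.prems(1) k m \<open>y \<in> M\<close> unfolding primitive_sublattice_def by blast
    have "vec.dim (vec_lambda ` {y\<in>M. dotp \<phi>0 y = 0}) < vec.dim (vec_lambda ` M)"
      using dim_kernel_less[OF \<open>m \<in> M\<close>] m by simp
    moreover have "\<forall>y\<in>{y\<in>M. dotp \<phi>0 y = 0}. dotp \<psi> y \<in> \<int>" using less.prems(2) by simp
    ultimately obtain \<phi>1
      where "intvec \<phi>1" "\<forall>y\<in>{y\<in>M. dotp \<phi>0 y = 0}. dotp \<phi>1 y = dotp \<psi> y"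
      using less.hyps primitive_sublattice_kernel[OF less.prems(1)] by blast
    then show ?thesis
      using functional_extends_from_kernel[OF sl \<open>m \<in> M\<close>] m less.prems by auto
  qed
qed

lemma even_unimodular_radical_trivial:
  assumes "even_unimodular G" "\<forall>z. bil G x z = 0"
  shows "x = (\<lambda>i. 0)"
proof
  fix i
  show "x i = 0"
  proof (rule ccontr)
    assume "x i \<noteq> 0"
    have "intvec (smul (1 / (2 * x i)) x)"
      using assms by (simp add: even_unimodular_def bil_smul_left)
    then have "1 / (2 * x i) * x i \<in> \<int>" unfolding intvec_def smul_def by blast
    then have "(1 / 2 :: rat) \<in> \<int>" using \<open>x i \<noteq> 0\<close> by simp
    then obtain j :: int where "of_int j = (1 / 2 :: rat)" by (auto elim!: Ints_cases)
    then have "of_int (2 * j) = (of_int 1 :: rat)" by simp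
    then have "2 * j = 1" by (simp only: of_int_eq_iff)
    then show False by presburger
  qed
qed

text \<open>The Gram matrix is injective on \<open>\<rat>\<^sup>n\<close>, hence surjective; self-duality makes the
  preimage of an integral functional integral.\<close>
lemma even_unimodular_represents_functional:
  fixes G :: "'n::finite \<Rightarrow> 'n \<Rightarrow> int"
  assumes "even_unimodular G" "intvec \<phi>"
  shows "\<exists>w. intvec w \<and> (\<forall>z. bil G w z = dotp \<phi> z)"
proof -
  define A :: "rat^'n^'n" where "A = (\<chi> j i. of_int (G i j))"
  have bil_A: "bil G (\<lambda>i. v $ i) z = dotp (\<lambda>j. (A *v v) $ j) z" for v z
    by (simp add: bil_eq_dotp_row A_def matrix_vector_mult_def mult.commute)
  have "inj ((*v) A)"
  proof (rule injI)
    fix u v assume "A *v u = A *v v"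
    then have "A *v (u - v) = 0" by (simp add: matrix_vector_mult_diff_distrib)
    then have "bil G (\<lambda>i. (u - v) $ i) z = 0" for z
      using bil_A[of "u - v" z] by (simp add: dotp_def)
    then have "(\<lambda>i. (u - v) $ i) = (\<lambda>i. 0)"
      using assms(1) even_unimodular_radical_trivial by blast
    then show "u = v" by (simp add: vec_eq_iff fun_eq_iff)
  qed
  then have "surj ((*v) A)" by (rule vec.linear_inj_imp_surj[OF matrix_vector_mul_linear_gen])
  then obtain v where "A *v v = (\<chi> j. \<phi> j)" by (metis surjD)
  then have "bil G (\<lambda>i. v $ i) z = dotp \<phi> z" for z by (simp add: bil_A)
  moreover have "intvec (\<lambda>i. v $ i)"
    using assms unfolding even_unimodular_def by (auto simp: calculation dotp_in_Ints)
  ultimately show ?thesis by blast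
qed

lemma dual_glues_with_orth_dual:
  fixes G :: "'n::finite \<Rightarrow> 'n \<Rightarrow> int"
  assumes "even_unimodular G" "primitive_sublattice NX" "x \<in> dual G NX"
  shows "\<exists>t\<in>dual G (orth G NX). intvec (vadd x t)"
proof -
  have row_int: "\<forall>y\<in>NX. dotp (\<lambda>j. \<Sum>i\<in>UNIV. x i * of_int (G i j)) y \<in> \<int>"
    using assms(3) by (simp add: dual_def flip: bil_eq_dotp_row)
  obtain \<phi> where "intvec \<phi>" and \<phi>: "\<forall>y\<in>NX. dotp \<phi> y = bil G x y"
    using primitive_sublattice_functional_extends[OF assms(2) row_int]
    unfolding bil_eq_dotp_row by blast
  then obtain w where w: "intvec w" "\<forall>z. bil G w z = dotp \<phi> z"
    using even_unimodular_represents_functional[OF assms(1)] by blast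
  define t where "t = (\<lambda>i. w i - x i)"
  obtain k :: int where k: "k \<noteq> 0" "smul (of_int k) x \<in> NX"
    using assms(3) by (auto simp: dual_def rspan_def)
  have "smul (of_int k) t \<in> orth G NX"
    unfolding orth_def
  proof (intro CollectI conjI ballI)
    have "intvec (smul (of_int k) x)"
      using k assms(2) by (auto simp: primitive_sublattice_def sublattice_def)
    then show "intvec (smul (of_int k) t)"
      using w(1) by (auto simp: intvec_def smul_def t_def right_diff_distrib)
    show "bil G (smul (of_int k) t) y = 0" if "y \<in> NX" for y
      using w(2) \<phi> that by (simp add: bil_smul_left t_def bil_diff_left)
  qed
  then have "t \<in> rspan (orth G NX)" using k(1) by (auto simp: rspan_def)
  moreover have "bil G t y \<in> \<int>" if "y \<in> orth G NX" for y
  proof -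
    have "bil G y (smul (of_int k) x) = 0" using that k(2) by (simp add: orth_def)
    then have "bil G x y = 0"
      using k(1) assms(1) bil_sym[of G x y] by (simp add: bil_smul_right even_unimodular_def)
    then show ?thesis
      using that w(1) bil_in_Ints[of w y] by (simp add: t_def bil_diff_left orth_def)
  qed
  moreover have "vadd x t = w" by (simp add: vadd_def t_def)
  ultimately show ?thesis using w(1) by (auto simp: dual_def)
qed

lemma mukai_shift_eq:
  fixes a b c d m n :: int and e :: rat
  assumes "a \<noteq> 0" "b \<noteq> 0" "c \<noteq> 0" "d \<noteq> 0"
    and "of_int d ^ 2 * e = 2 * of_int c ^ 2 * of_int a * of_int b"
  shows "madd (madd (madd (msmul (of_int (m * n * d) / of_int (2 * a * b))
              (- of_int a, \<lambda>i. 0, of_int b)) (0, k, 0)) (0, t, 0))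
            (msmul (of_int (n * d) / of_int (2 * c * a * b))
              (of_int (c * a), smul (of_int d) P, of_int (c * b)))
       = (- (of_int (n * d * (m - 1)) / of_int (2 * b)),
          vadd (vadd (smul (of_int (c * n) / e) P) k) t,
          of_int (n * d * (m + 1)) / of_int (2 * a))"
proof -
  have e: "e = 2 * of_int c ^ 2 * of_int a * of_int b / of_int d ^ 2"
    using assms by (simp add: field_simps)
  show ?thesis
    unfolding e using assms(1-4)
    by (simp add: madd_def msmul_def vadd_def smul_def fun_eq_iff field_simps power2_eq_square)
qed

text \<open>The hypothesis \<open>coprime c (d * g)\<close> is what makes \<open>T(X) = T(Y)\<close> (Mukai); \<open>eps_rel\<close>
  presupposes this identification by embedding \<open>t\<close> as \<open>(0, t, 0)\<close>, so it is not used below.\<close>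
theorem proposition2p3p2:
  fixes G :: "'n::finite \<Rightarrow> 'n \<Rightarrow> int"
    and NX :: "('n \<Rightarrow> rat) set"
    and H Ht kst :: "'n \<Rightarrow> rat"
    and r s c a b d g n m :: int
  assumes "card (UNIV :: 'n set) = 22"
    and "even_unimodular G"
    and "primitive_sublattice NX"
    and "nondegenerate_on G NX"
    and "H \<in> NX"
    and "bil G H H > 0"
    and "r > 0"
    and "bil G H H = 2 * of_int r * of_int s"
    and "d > 0" and "prim_vec Ht" and "H = smul (of_int d) Ht"
    and "g > 0" and "{bil G Ht x | x. x \<in> NX} = {of_int (g * j) | j. True}"
    and "prim_mvec (of_int r, H, of_int s)"
    and "c = gcd r s" and "a = r div c" and "b = s div c"
    and "coprime c (d * g)"
    and "kst \<in> dual G (Kperp G NX Ht)"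
    and "vadd (smul (of_int (c * n) / bil G Ht Ht) Ht) kst \<in> dual G NX"
    and "m mod (2 * a) = (-1) mod (2 * a)" and "m mod (2 * b) = 1 mod (2 * b)"
  shows "eps_rel G NX (of_int r, H, of_int s)
           (vadd (smul (of_int (c * n) / bil G Ht Ht) Ht) kst)
           (madd (msmul (of_int (m * n * d) / of_int (2 * a * b)) (- of_int a, (\<lambda>i. 0), of_int b))
                 (0, kst, 0))"
proof -
  obtain t where t: "t \<in> dual G (orth G NX)"
    "intvec (vadd (vadd (smul (of_int (c * n) / bil G Ht Ht) Ht) kst) t)"
    using dual_glues_with_orth_dual assms(2,3,20) by blast
  have r: "r = c * a" and s: "s = c * b" using assms(15-17) by simp_all
  have "s \<noteq> 0" using assms(6,8) by auto
  then have nonzero: "a \<noteq> 0" "b \<noteq> 0" "c \<noteq> 0" "d \<noteq> 0" using assms(7,9) r s by auto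
  have "of_int d ^ 2 * bil G Ht Ht = 2 * of_int c ^ 2 * of_int a * of_int b"
    using assms(8,11) unfolding r s
    by (simp add: bil_smul_left bil_smul_right power2_eq_square mult_ac)
  note shift = mukai_shift_eq[OF nonzero this, of m n kst t Ht]
  have "(of_int (n * d * (m - 1)) / of_int (2 * b) :: rat) \<in> \<int>"
    "(of_int (n * d * (m + 1)) / of_int (2 * a) :: rat) \<in> \<int>"
    using assms(21,22) by (intro of_int_divide_in_Ints dvd_mult; simp add: mod_eq_dvd_iff)+
  then have "mint (madd (madd (madd (msmul (of_int (m * n * d) / of_int (2 * a * b))
      (- of_int a, \<lambda>i. 0, of_int b)) (0, kst, 0)) (0, t, 0))
      (msmul (of_int (n * d) / of_int (2 * c * a * b)) (of_int r, H, of_int s)))"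
    unfolding r s assms(11) shift mint_def prod.case using t(2) by (meson Ints_minus)
  then show ?thesis using t unfolding eps_rel_def by blast
qed

end
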